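(* Let $n$ be a positive integer, let $\mathcal{T}_n$ be the transducer defined below and let $\mathcal{T}'_n$ be the trimmed result of the specialized determinization of $\mathcal{T}_n$. Then: (1) $\mathcal{T}'_n$ has at least $(2n+3)2^{n-2}$ states; (2) the accessible subset-construction determinization of the underlying automaton of $\mathcal{T}'_n$ has at least $n!+2$ states; (3) the accessible subset-construction determinization of the reversed underlying automaton of $\mathcal{T}'_n$ has at least $2^n+n$ states.
   Context: Let $\Sigma_n=\{a_1,\dots,a_n\}$ and let the output monoid be the free monoid $\{1\}^*$. $\mathcal{T}_n=\langle\Sigma_n^*\times\{1\}^*,Q,\{s\},\{f\},\Delta_n\rangle$ with $Q=\{s,q_1,\dots,q_n,f\}$ and $\Delta_n=\Delta_{s,n}\cup\Delta_{Q_n}\cup\Delta_{f,n}$ where: $\Delta_{s,n}=\{\langle s,\langle a_j,1^{i-1}\rangle,q_i\rangle:1\le i,j\le n\}$; $\Delta_{Q_n}$ consists, for all $1\le i,j\le n$, of $\langle q_i,\langle a_j,1^n\rangle,q_i\rangle$ if $i\notin\{1,j\}$, $\langle q_1,\langle a_j,1^{n+j-1}\rangle,q_j\rangle$ if $i=1$, and $\langle q_j,\langle a_j,1^{n-j+1}\rangle,q_1\rangle$ if $i=j\neq1$; $\Delta_{f,n}=\{\langle q_i,\langle a_j,1^{2n-i+1}\rangle,f\rangle:1\le j\le i\le n\}$. Specialized determinization (for a transducer with single initial state $i$ over $\Sigma\times\Omega^*$; here $\Omega=\{1\}$ with strict lexicographic order $1^k\prec1^l$ iff $k<l$): states are pairs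 $\langle p,N\rangle\in Q\times2^Q$, generated inductively from $\langle i,\emptyset\rangle$: for a generated $\langle p,N\rangle$ and $\langle p,\langle a,v\rangle,p'\rangle\in\Delta$ let $N'=\{q':\exists q\in N,\exists v'\ \langle q,\langle a,v'\rangle,q'\rangle\in\Delta\}\cup\{q:\exists v'\prec v\ \langle p,\langle a,v'\rangle,q\rangle\in\Delta\}$; if $p'\notin N'$ add state $\langle p',N'\rangle$ and transition $\langle\langle p,N\rangle,\langle a,v\rangle,\langle p',N'\rangle\rangle$. Final states are $\{\langle f,N\rangle:f\in F,\ N\cap F=\emptyset\}$. Trimming keeps only accessible and co-accessible states. The underlying automaton of a transducer is the automaton over $\Sigma$ with transitions $\langle p,a,q\rangle$ for each $\langle p,\langle a,m\rangle,q\rangle\in\Delta$ (same states, initial and final states); its reversal swaps initial and final states and reverses transitions. The accessible subset-construction determinization has as states the subsets reachable from the set of initial states via $\delta(P,a)=\{q:\exists p\in P\ \langle p,a,q\rangle\}$. *)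

theory Defs
  imports Complex_Main
begin

record ('s, 'l) aut =
  states :: "'s set"
  inits  :: "'s set"
  finals :: "'s set"
  trans  :: "('s \<times> 'l \<times> 's) set"

(* States: S = s, Q i = q_i, Fin = f.  Letter a_j is encoded by j :: nat,
   output word 1^k in the free monoid {1}^* is encoded by k :: nat. *)
datatype st = S | Q nat | Fin

definition Delta :: "nat \<Rightarrow> (st \<times> (nat \<times> nat) \<times> st) set" where
  "Delta n =
     {(S, (j, i - 1), Q i) | i j. 1 \<le> i \<and> i \<le> n \<and> 1 \<le> j \<and> j \<le> n}
   \<union> {(Q i, (j, n), Q i) | i j. 1 \<le> i \<and> i \<le> n \<and> 1 \<le> j \<and> j \<le> n \<and> i \<notin> {1, j}}
   \<union> {(Q 1, (j, n + j - 1), Q j) | j. 1 \<le> j \<and> j \<le> n}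
   \<union> {(Q j, (j, n - j + 1), Q 1) | j. 1 \<le> j \<and> j \<le> n \<and> j \<noteq> 1}
   \<union> {(Q i, (j, 2 * n - i + 1), Fin) | i j. 1 \<le> j \<and> j \<le> i \<and> i \<le> n}"

definition Tn :: "nat \<Rightarrow> (st, nat \<times> nat) aut" where
  "Tn n = \<lparr> states = {S, Fin} \<union> Q ` {1..n}, inits = {S}, finals = {Fin}, trans = Delta n \<rparr>"

(* Output words 1^k are encoded by k; the strict lexicographic order 1^k < 1^l is k < l. *)
definition sd_succ :: "('q \<times> ('a \<times> nat) \<times> 'q) set \<Rightarrow> 'q set \<Rightarrow> 'q \<Rightarrow> 'a \<Rightarrow> nat \<Rightarrow> 'q set" where
  "sd_succ D N p a v =
     {q'. \<exists>q\<in>N. \<exists>v'. (q, (a, v'), q') \<in> D} \<union> {q. \<exists>v'. v' < v \<and> (p, (a, v'), q) \<in> D}"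

inductive_set sd_states :: "('q \<times> ('a \<times> nat) \<times> 'q) set \<Rightarrow> 'q \<Rightarrow> ('q \<times> 'q set) set"
  for D :: "('q \<times> ('a \<times> nat) \<times> 'q) set" and i :: 'q where
  init: "(i, {}) \<in> sd_states D i"
| step: "\<lbrakk>(p, N) \<in> sd_states D i; (p, (a, v), p') \<in> D; p' \<notin> sd_succ D N p a v\<rbrakk>
         \<Longrightarrow> (p', sd_succ D N p a v) \<in> sd_states D i"

definition sd_trans :: "('q \<times> ('a \<times> nat) \<times> 'q) set \<Rightarrow> 'q
    \<Rightarrow> (('q \<times> 'q set) \<times> ('a \<times> nat) \<times> ('q \<times> 'q set)) set" where
  "sd_trans D i = {((p, N), (a, v), (p', sd_succ D N p a v)) | p N a v p'.
       (p, N) \<in> sd_states D i \<and> (p, (a, v), p') \<in> D \<and> p' \<notin> sd_succ D N p a v}"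

definition spec_det :: "('q, 'a \<times> nat) aut \<Rightarrow> 'q \<Rightarrow> ('q \<times> 'q set, 'a \<times> nat) aut" where
  "spec_det T i = \<lparr> states = sd_states (trans T) i,
                    inits = {(i, {})},
                    finals = {(f, N) | f N. (f, N) \<in> sd_states (trans T) i \<and> f \<in> finals T \<and> N \<inter> finals T = {}},
                    trans = sd_trans (trans T) i \<rparr>"

definition edge_rel :: "('s, 'l) aut \<Rightarrow> ('s \<times> 's) set" where
  "edge_rel A = {(p, q). \<exists>l. (p, l, q) \<in> trans A}"

definition accessible :: "('s, 'l) aut \<Rightarrow> 's set" where
  "accessible A = {q \<in> states A. \<exists>p \<in> inits A. (p, q) \<in> (edge_rel A)\<^sup>*}"

definition coaccessible :: "('s, 'l) aut \<Rightarrow> 's set" where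
  "coaccessible A = {p \<in> states A. \<exists>q \<in> finals A. (p, q) \<in> (edge_rel A)\<^sup>*}"

definition trim :: "('s, 'l) aut \<Rightarrow> ('s, 'l) aut" where
  "trim A = (let K = accessible A \<inter> coaccessible A in
     \<lparr> states = K, inits = inits A \<inter> K, finals = finals A \<inter> K,
       trans = {(p, l, q). (p, l, q) \<in> trans A \<and> p \<in> K \<and> q \<in> K} \<rparr>)"

definition Tn' :: "nat \<Rightarrow> (st \<times> st set, nat \<times> nat) aut" where
  "Tn' n = trim (spec_det (Tn n) S)"

definition underlying :: "('s, 'a \<times> 'o) aut \<Rightarrow> ('s, 'a) aut" where
  "underlying T = \<lparr> states = states T, inits = inits T, finals = finals T,
                    trans = {(p, a, q). \<exists>m. (p, (a, m), q) \<in> trans T} \<rparr>"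

definition reversal :: "('s, 'a) aut \<Rightarrow> ('s, 'a) aut" where
  "reversal A = \<lparr> states = states A, inits = finals A, finals = inits A,
                  trans = {(q, a, p). (p, a, q) \<in> trans A} \<rparr>"

definition subset_step :: "('s, 'a) aut \<Rightarrow> 's set \<Rightarrow> 'a \<Rightarrow> 's set" where
  "subset_step A P a = {q. \<exists>p\<in>P. (p, a, q) \<in> trans A}"

inductive_set subset_det_states :: "'a set \<Rightarrow> ('s, 'a) aut \<Rightarrow> 's set set"
  for Sigma :: "'a set" and A :: "('s, 'a) aut" where
  init: "inits A \<in> subset_det_states Sigma A"
| step: "\<lbrakk>P \<in> subset_det_states Sigma A; a \<in> Sigma\<rbrakk> \<Longrightarrow> subset_step A P a \<in> subset_det_states Sigma A"

end

theory Submission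
  imports Defs "HOL-Combinatorics.Permutations"
begin

(* The letter a_j acts on the indices of the states q_1, ..., q_n of T_n through the
   transposition (1 j), and these transpositions generate the symmetric group on {1..n}.
   The reachable states of the specialized determinization are the initial one, the pairs
   (q_k, {q_i | i in I} plus possibly f) with k not in I, and the pairs (f, {q_i | i in Y});
   by the symmetry every pair (k, I) and every nonempty Y occurs, and all states are useful,
   so T'_n has at least n 2^(n-1) + 2^n >= (2n+3) 2^(n-2) states.
   In the subset construction, a_1 leads from the initial subset to the staircase
   {(q_i, {q_1, ..., q_(i-1)}) | i <= n}, which the letters move around by all n! permutations;
   reading a_1 once more adds a final state, giving n! + 2 subsets.
   In the reversed automaton, for every nonempty Z the states (q_k, N) with k in Z and N
   disjoint from Z form a reachable subset together with the initial state, and without it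
   when Z = {j..n}; with the set of final states this gives 2^n + n subsets. *)

section \<open>Permutations generated by the transpositions \<open>(c j)\<close>\<close>

lemma transpose_conj_star:
  assumes "a \<noteq> b" "b \<noteq> c"
  shows "Transposition.transpose c a \<circ> Transposition.transpose c b \<circ> Transposition.transpose c a
           = Transposition.transpose a b"
  using transpose_comp_triple[of a b c] assms by (simp add: transpose_commute)

lemma permutes_in_star_closure:
  assumes "p permutes U" "finite U" "c \<in> U" "id \<in> G"
    and closed: "\<And>j g. j \<in> U \<Longrightarrow> g \<in> G \<Longrightarrow> Transposition.transpose c j \<circ> g \<in> G"
  shows "p \<in> G"
  using assms(1,2)
proof (induction rule: permutes_induct)
  case id
  show ?case by (fact assms(4))
next
  case (swap a b p)
  show ?case
  proof (cases "b = c")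
    case True
    then show ?thesis using closed swap by (metis transpose_commute)
  next
    case False
    have "Transposition.transpose c a \<circ>
        (Transposition.transpose c b \<circ> (Transposition.transpose c a \<circ> p)) \<in> G"
      using closed swap assms(3) by blast
    then show ?thesis
      unfolding transpose_conj_star[OF \<open>a \<noteq> b\<close> False, symmetric] by (simp only: comp_assoc)
  qed
qed

lemma permutes_onto_subset:
  assumes "finite U" "X \<subseteq> U" "Y \<subseteq> U" "card X = card Y"
  obtains p where "p permutes U" "p ` X = Y"
proof -
  have fin: "finite X" "finite Y" "finite (U - X)" "finite (U - Y)"
    using assms finite_subset by blast+
  obtain f where f: "bij_betw f X Y" using finite_same_card_bij fin assms(4) by blast
  have "card (U - X) = card (U - Y)" using assms by (simp add: card_Diff_subset fin)
  then obtain g where g: "bij_betw g (U - X) (U - Y)" using finite_same_card_bij fin by blast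
  define p where "p x = (if x \<in> X then f x else if x \<in> U then g x else x)" for x
  have "bij_betw (\<lambda>x. if x \<in> X then f x else g x) (X \<union> (U - X)) (Y \<union> (U - Y))"
    by (rule bij_betw_disjoint_Un[OF f g]) auto
  moreover have "X \<union> (U - X) = U" "Y \<union> (U - Y) = U" using assms(2,3) by auto
  ultimately have "bij_betw p U U"
    by (auto simp: p_def intro: bij_betw_cong[THEN iffD1, rotated])
  then have "p permutes U" by (rule bij_imp_permutes) (use assms(2) in \<open>auto simp: p_def\<close>)
  moreover have "p ` X = Y" using f by (auto simp: p_def bij_betw_def)
  ultimately show thesis by (rule that)
qed

lemma permutes_onto_pointed_subset:
  assumes "finite U" "X \<subseteq> U" "Y \<subseteq> U" "card X = card Y" "x \<in> U - X" "y \<in> U - Y"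
  obtains p where "p permutes U" "p x = y" "p ` X = Y"
proof -
  define t where "t = Transposition.transpose x y"
  have t: "t permutes U" unfolding t_def using assms(5,6) by (simp add: permutes_swap_id)
  have "t ` X \<subseteq> U - {y}" using assms(2,5) by (auto simp: t_def transpose_def)
  moreover have "card (t ` X) = card Y" using assms(4) by (simp add: t_def card_image)
  ultimately obtain q where q: "q permutes U - {y}" "q ` t ` X = Y"
    using permutes_onto_subset[of "U - {y}" "t ` X" Y] assms(1,3,6) by blast
  have "q \<circ> t permutes U" using q(1) t by (meson Diff_subset permutes_compose permutes_subset)
  moreover have "(q \<circ> t) x = y" using permutes_not_in[OF q(1)] by (simp add: t_def)
  moreover have "(q \<circ> t) ` X = Y" using q(2) by (simp add: image_comp)
  ultimately show thesis by (rule that)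
qed

section \<open>Single steps of the specialized determinization\<close>

abbreviation letter_perm :: "nat \<Rightarrow> nat \<Rightarrow> nat" where
  "letter_perm j \<equiv> Transposition.transpose 1 j"

definition perm_output :: "nat \<Rightarrow> nat \<Rightarrow> nat \<Rightarrow> nat" where
  "perm_output n j k = (if k = 1 then n + j - 1 else if k = j then n - j + 1 else n)"

lemma Delta_from_S:
  "(S, (j, v), q) \<in> Delta n \<longleftrightarrow> j \<in> {1..n} \<and> (\<exists>i\<in>{1..n}. q = Q i \<and> v = i - 1)"
  unfolding Delta_def by auto

lemma Delta_from_Q:
  "(Q k, (j, v), q) \<in> Delta n \<longleftrightarrow> k \<in> {1..n} \<and> j \<in> {1..n} \<and>
     (q = Q (letter_perm j k) \<and> v = perm_output n j k \<or> q = Fin \<and> j \<le> k \<and> v = 2 * n - k + 1)"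
  unfolding Delta_def perm_output_def transpose_def by auto

lemma Delta_from_Fin: "(Fin, l, q) \<notin> Delta n"
  unfolding Delta_def by auto

lemma Delta_to_S: "(p, l, S) \<notin> Delta n"
  unfolding Delta_def by auto

lemma perm_output_less: "k \<in> {1..n} \<Longrightarrow> j \<in> {1..n} \<Longrightarrow> perm_output n j k < 2 * n - k + 1"
  unfolding perm_output_def by auto

definition fin_if :: "bool \<Rightarrow> st set" where
  "fin_if b = (if b then {Fin} else {})"

definition qstate :: "nat \<Rightarrow> nat set \<Rightarrow> bool \<Rightarrow> st \<times> st set" where
  "qstate k I b = (Q k, Q ` I \<union> fin_if b)"

definition admissible :: "nat \<Rightarrow> nat \<Rightarrow> nat set \<Rightarrow> bool" where
  "admissible n k I \<longleftrightarrow> k \<in> {1..n} \<and> I \<subseteq> {1..n} - {k}"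

lemma fin_if_simps [simp]: "Fin \<in> fin_if b \<longleftrightarrow> b" "Q k \<notin> fin_if b" "S \<notin> fin_if b"
  unfolding fin_if_def by auto

lemma Q_image_eq_iff [simp]: "Q ` Y = Q ` Y' \<longleftrightarrow> Y = Y'"
  by (simp add: inj_image_eq_iff inj_def)

lemma Q_image_Un_fin_if_eq_iff [simp]:
  "Q ` I \<union> fin_if b = Q ` I' \<union> fin_if b' \<longleftrightarrow> I = I' \<and> b = b'"
  by (auto simp: fin_if_def set_eq_iff image_iff split: if_splits)

lemma qstate_eq_iff [simp]: "qstate k I b = qstate k' I' b' \<longleftrightarrow> k = k' \<and> I = I' \<and> b = b'"
  unfolding qstate_def by simp

lemma admissible_letter_perm:
  "admissible n k I \<Longrightarrow> j \<in> {1..n} \<Longrightarrow> admissible n (letter_perm j k) (letter_perm j ` I)"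
  unfolding admissible_def transpose_def by auto

lemma letter_perm_image_subset: "I \<subseteq> {1..n} \<Longrightarrow> j \<in> {1..n} \<Longrightarrow> letter_perm j ` I \<subseteq> {1..n}"
  unfolding transpose_def by auto

abbreviation reach :: "nat \<Rightarrow> (st \<times> st set) set" where
  "reach n \<equiv> sd_states (Delta n) S"

lemma Delta_image_from_Q:
  assumes "I \<subseteq> {1..n}" "j \<in> {1..n}"
  shows "{q'. \<exists>q\<in>Q ` I \<union> fin_if b. \<exists>v. (q, (j, v), q') \<in> Delta n}
           = Q ` letter_perm j ` I \<union> fin_if (\<exists>m\<in>I. j \<le> m)"
proof -
  have "{q'. \<exists>q\<in>Q ` I \<union> fin_if b. \<exists>v. (q, (j, v), q') \<in> Delta n}
          = {q'. \<exists>m\<in>I. \<exists>v. (Q m, (j, v), q') \<in> Delta n}"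
    using Delta_from_Fin by (auto simp: fin_if_def)
  also have "\<dots> = Q ` letter_perm j ` I \<union> fin_if (\<exists>m\<in>I. j \<le> m)"
    using assms by (auto simp: Delta_from_Q fin_if_def subset_iff; blast)
  finally show ?thesis .
qed

lemma sd_succ_perm:
  assumes "admissible n k I" "j \<in> {1..n}"
  shows "sd_succ (Delta n) (Q ` I \<union> fin_if b) (Q k) j (perm_output n j k)
           = Q ` letter_perm j ` I \<union> fin_if (\<exists>m\<in>I. j \<le> m)"
proof -
  have "I \<subseteq> {1..n}" using assms(1) by (auto simp: admissible_def)
  have lower: "{q. \<exists>v. v < perm_output n j k \<and> (Q k, (j, v), q) \<in> Delta n} = {}"
    using perm_output_less[of k n j] assms by (auto simp: Delta_from_Q admissible_def)
  then show ?thesis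
    unfolding sd_succ_def Delta_image_from_Q[OF \<open>I \<subseteq> {1..n}\<close> assms(2)] lower by simp
qed

lemma sd_succ_final:
  assumes "admissible n k I" "j \<in> {1..n}"
  shows "sd_succ (Delta n) (Q ` I \<union> fin_if b) (Q k) j (2 * n - k + 1)
           = insert (Q (letter_perm j k)) (Q ` letter_perm j ` I \<union> fin_if (\<exists>m\<in>I. j \<le> m))"
proof -
  have "I \<subseteq> {1..n}" using assms(1) by (auto simp: admissible_def)
  have lower: "{q. \<exists>v. v < 2 * n - k + 1 \<and> (Q k, (j, v), q) \<in> Delta n} = {Q (letter_perm j k)}"
    using perm_output_less[of k n j] assms by (auto simp: Delta_from_Q admissible_def)
  then show ?thesis
    unfolding sd_succ_def Delta_image_from_Q[OF \<open>I \<subseteq> {1..n}\<close> assms(2)] lower by simp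
qed

lemma sd_succ_from_S:
  assumes "i \<in> {1..n}" "j \<in> {1..n}"
  shows "sd_succ (Delta n) {} S j (i - 1) = Q ` {1..i - 1}"
  using assms by (auto simp: sd_succ_def Delta_from_S)

definition sd_edge :: "nat \<Rightarrow> nat \<Rightarrow> st \<times> st set \<Rightarrow> st \<times> st set \<Rightarrow> bool" where
  "sd_edge n j x y \<longleftrightarrow> (\<exists>v. (x, (j, v), y) \<in> sd_trans (Delta n) S)"

lemma sd_edge_iff:
  "sd_edge n j (p, N) y \<longleftrightarrow> (p, N) \<in> reach n \<and> (\<exists>v p'. (p, (j, v), p') \<in> Delta n
     \<and> p' \<notin> sd_succ (Delta n) N p j v \<and> y = (p', sd_succ (Delta n) N p j v))"
  unfolding sd_edge_def sd_trans_def by auto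

lemma sd_trans_reach: "(x, l, y) \<in> sd_trans (Delta n) S \<Longrightarrow> x \<in> reach n \<and> y \<in> reach n"
  unfolding sd_trans_def by (auto intro: sd_states.step)

lemma sd_edge_source_reach: "sd_edge n j x y \<Longrightarrow> x \<in> reach n"
  unfolding sd_edge_def using sd_trans_reach by blast

lemma sd_edge_target_reach: "sd_edge n j x y \<Longrightarrow> y \<in> reach n"
  unfolding sd_edge_def using sd_trans_reach by blast

lemma no_sd_edge_from_Fin: "\<not> sd_edge n j (Fin, N) y"
  unfolding sd_edge_iff using Delta_from_Fin by blast

lemma sd_edge_target_not_S: "sd_edge n j x y \<Longrightarrow> fst y \<noteq> S"
  using sd_edge_iff[of n j "fst x" "snd x" y] Delta_to_S by fastforce

lemma sd_edge_from_S:
  "sd_edge n j (S, {}) y \<longleftrightarrow> j \<in> {1..n} \<and> (\<exists>i\<in>{1..n}. y = qstate i {1..i - 1} False)"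
  using sd_succ_from_S sd_states.init[where D="Delta n" and i=S]
  by (auto simp: sd_edge_iff Delta_from_S qstate_def fin_if_def)

lemma sd_edge_from_qstate:
  assumes "admissible n k I" "qstate k I b \<in> reach n"
  shows "sd_edge n j (qstate k I b) y \<longleftrightarrow> j \<in> {1..n} \<and>
     (y = qstate (letter_perm j k) (letter_perm j ` I) (\<exists>m\<in>I. j \<le> m)
      \<or> j \<le> k \<and> (\<forall>m\<in>I. m < j) \<and> y = (Fin, Q ` letter_perm j ` insert k I))"
proof (cases "j \<in> {1..n}")
  case False
  then show ?thesis by (auto simp: qstate_def sd_edge_iff Delta_from_Q)
next
  case j: True
  let ?succ = "sd_succ (Delta n) (Q ` I \<union> fin_if b) (Q k) j"
  have "k \<notin> I" using assms(1) by (auto simp: admissible_def)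
  then have perm: "?succ (perm_output n j k)
      = snd (qstate (letter_perm j k) (letter_perm j ` I) (\<exists>m\<in>I. j \<le> m))"
    and perm_new: "Q (letter_perm j k) \<notin> ?succ (perm_output n j k)"
    using sd_succ_perm[OF assms(1) j] by (auto simp: qstate_def transpose_eq_iff)
  have final: "?succ (2 * n - k + 1) = insert (Q (letter_perm j k)) (Q ` letter_perm j ` I)
      \<union> fin_if (\<exists>m\<in>I. j \<le> m)"
    using sd_succ_final[OF assms(1) j] by auto
  have "sd_edge n j (qstate k I b) y \<longleftrightarrow>
      y = (Q (letter_perm j k), ?succ (perm_output n j k))
      \<or> j \<le> k \<and> Fin \<notin> ?succ (2 * n - k + 1) \<and> y = (Fin, ?succ (2 * n - k + 1))"
    using assms j perm_new by (auto simp: qstate_def sd_edge_iff Delta_from_Q admissible_def)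
  also have "\<dots> \<longleftrightarrow> y = qstate (letter_perm j k) (letter_perm j ` I) (\<exists>m\<in>I. j \<le> m)
      \<or> j \<le> k \<and> (\<forall>m\<in>I. m < j) \<and> y = (Fin, Q ` letter_perm j ` insert k I)"
    unfolding perm final by (auto simp: qstate_def fin_if_def not_le)
  finally show ?thesis using j by simp
qed

section \<open>Reachable states\<close>

lemma reach_cases [consumes 1, case_names S Q Fin]:
  assumes "x \<in> reach n"
  obtains "x = (S, {})"
  | k I b where "x = qstate k I b" "admissible n k I"
  | Y where "x = (Fin, Q ` Y)" "Y \<subseteq> {1..n}"
proof -
  have "(p0, N0) = (S, {}) \<or> (\<exists>k I b. (p0, N0) = qstate k I b \<and> admissible n k I)
      \<or> (\<exists>Y. (p0, N0) = (Fin, Q ` Y) \<and> Y \<subseteq> {1..n})" if "(p0, N0) \<in> reach n" for p0 N0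
    using that
  proof (induction rule: sd_states.induct)
    case init
    then show ?case by simp
  next
    case (step p N a v p')
    then have edge: "sd_edge n a (p, N) (p', sd_succ (Delta n) N p a v)"
      unfolding sd_edge_iff by blast
    from step.IH show ?case
    proof (elim disjE exE conjE)
      assume "(p, N) = (S, {})"
      then obtain i where "i \<in> {1..n}" "(p', sd_succ (Delta n) N p a v) = qstate i {1..i - 1} False"
        using edge by (auto simp: sd_edge_from_S)
      moreover from this(1) have "admissible n i {1..i - 1}" by (auto simp: admissible_def)
      ultimately show ?thesis by blast
    next
      fix k I b
      assume pN: "(p, N) = qstate k I b" and adm: "admissible n k I"
      have "letter_perm a ` insert k I \<subseteq> {1..n}" if "a \<in> {1..n}"
        using adm letter_perm_image_subset[OF _ that, of "insert k I"] by (auto simp: admissible_def)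
      then show ?thesis
        using edge adm admissible_letter_perm[OF adm] step.hyps(1)
        unfolding pN sd_edge_from_qstate[OF adm step.hyps(1)[unfolded pN]] by blast
    next
      fix Y
      assume "(p, N) = (Fin, Q ` Y)"
      then show ?thesis using edge no_sd_edge_from_Fin by simp
    qed
  qed
  then have "x = (S, {}) \<or> (\<exists>k I b. x = qstate k I b \<and> admissible n k I)
      \<or> (\<exists>Y. x = (Fin, Q ` Y) \<and> Y \<subseteq> {1..n})"
    using assms by (metis prod.collapse)
  then show thesis using that by blast
qed

lemma admissible_of_reach: "qstate k I b \<in> reach n \<Longrightarrow> admissible n k I"
  by (cases rule: reach_cases) (auto simp: qstate_def)

definition index_pairs :: "(st \<times> st set) set \<Rightarrow> (nat \<times> nat set) set" where
  "index_pairs P = {(k, I). \<exists>b. qstate k I b \<in> P}"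

lemma index_pairs_reach_letter_perm:
  assumes "(k, I) \<in> index_pairs (reach n)" "j \<in> {1..n}"
  shows "(letter_perm j k, letter_perm j ` I) \<in> index_pairs (reach n)"
proof -
  obtain b where reached: "qstate k I b \<in> reach n" using assms(1) by (auto simp: index_pairs_def)
  with assms(2) have "sd_edge n j (qstate k I b)
      (qstate (letter_perm j k) (letter_perm j ` I) (\<exists>m\<in>I. j \<le> m))"
    using sd_edge_from_qstate[OF admissible_of_reach reached] by simp
  then show ?thesis using sd_edge_target_reach unfolding index_pairs_def by blast
qed

lemma index_pairs_reach_permutes:
  assumes "(k, I) \<in> index_pairs (reach n)" "p permutes {1..n}"
  shows "(p k, p ` I) \<in> index_pairs (reach n)"
proof -
  have "1 \<in> {1..n}"
    using admissible_of_reach assms(1) by (force simp: index_pairs_def admissible_def)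
  have "p \<in> {p. (p k, p ` I) \<in> index_pairs (reach n)}"
  proof (rule permutes_in_star_closure[OF assms(2) finite_atLeastAtMost \<open>1 \<in> {1..n}\<close>])
    show "id \<in> {p. (p k, p ` I) \<in> index_pairs (reach n)}" using assms(1) by simp
    fix j g
    assume "j \<in> {1..n}" "g \<in> {p. (p k, p ` I) \<in> index_pairs (reach n)}"
    then show "letter_perm j \<circ> g \<in> {p. (p k, p ` I) \<in> index_pairs (reach n)}"
      using index_pairs_reach_letter_perm[of "g k" "g ` I" n j] by (simp add: image_comp)
  qed
  then show ?thesis by simp
qed

lemma admissible_in_index_pairs_reach:
  assumes "admissible n k I"
  shows "(k, I) \<in> index_pairs (reach n)"
proof -
  define c where "c = card I"
  have k: "k \<in> {1..n}" "I \<subseteq> {1..n} - {k}" using assms by (auto simp: admissible_def)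
  have "card I \<le> card ({1..n} - {k})" using k by (intro card_mono) auto
  then have "c < n" using k by (auto simp: c_def)
  then have "sd_edge n 1 (S, {}) (qstate (c + 1) {1..c} False)" by (auto simp: sd_edge_from_S)
  then have "(c + 1, {1..c}) \<in> index_pairs (reach n)"
    using sd_edge_target_reach unfolding index_pairs_def by blast
  moreover obtain p where "p permutes {1..n}" "p (c + 1) = k" "p ` {1..c} = I"
    using permutes_onto_pointed_subset[of "{1..n}" "{1..c}" I "c + 1" k] k \<open>c < n\<close>
    by (auto simp: c_def)
  ultimately show ?thesis using index_pairs_reach_permutes[of "c + 1" "{1..c}" n p] by simp
qed

lemma qstate_True_in_reach:
  assumes "admissible n k I" "I \<noteq> {}"
  shows "qstate k I True \<in> reach n"
proof -
  obtain b where reached: "qstate k I b \<in> reach n"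
    using admissible_in_index_pairs_reach[OF assms(1)] by (auto simp: index_pairs_def)
  have "1 \<in> {1..n}" "\<exists>m\<in>I. 1 \<le> m" using assms by (auto simp: admissible_def)
  then have "sd_edge n 1 (qstate k I b) (qstate k I True)"
    using sd_edge_from_qstate[OF assms(1) reached] by simp
  then show ?thesis by (rule sd_edge_target_reach)
qed

lemma qstate_False_in_reach:
  assumes "admissible n k I" "1 \<notin> I"
  shows "qstate k I False \<in> reach n"
proof -
  have n: "n \<in> {1..n}" using assms(1) by (auto simp: admissible_def)
  note adm = admissible_letter_perm[OF assms(1) n]
  obtain b where reached: "qstate (letter_perm n k) (letter_perm n ` I) b \<in> reach n"
    using admissible_in_index_pairs_reach[OF adm] by (auto simp: index_pairs_def)
  have "\<not> (\<exists>m\<in>letter_perm n ` I. n \<le> m)"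
    using assms by (auto simp: admissible_def transpose_def)
  then have "sd_edge n n (qstate (letter_perm n k) (letter_perm n ` I) b) (qstate k I False)"
    using sd_edge_from_qstate[OF adm reached] n by (simp add: image_comp)
  then show ?thesis by (rule sd_edge_target_reach)
qed

lemma Fin_state_in_reach_via:
  assumes "admissible n k I" "j \<in> {1..n}" "j \<le> k" "\<forall>m\<in>I. m < j"
  shows "(Fin, Q ` letter_perm j ` insert k I) \<in> reach n"
proof -
  obtain b where reached: "qstate k I b \<in> reach n"
    using admissible_in_index_pairs_reach[OF assms(1)] by (auto simp: index_pairs_def)
  then have "sd_edge n j (qstate k I b) (Fin, Q ` letter_perm j ` insert k I)"
    using sd_edge_from_qstate[OF assms(1) reached] assms(2-4) by simp
  then show ?thesis by (rule sd_edge_target_reach)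
qed

lemma letter_perm_image_remove:
  assumes "1 \<in> W" "j \<in> W"
  shows "letter_perm j ` (W - {j}) = W - {1}"
proof (cases "j = 1")
  case False
  have "W - {j} = insert 1 (W - {1, j})" using assms(1) False by auto
  moreover have "letter_perm j ` (W - {1, j}) = W - {1, j}"
    by (rule image_cong[OF refl, where g = id, simplified]) simp
  ultimately show ?thesis using assms(2) False by auto
qed simp

lemma Fin_state_in_reach:
  assumes "Y \<subseteq> {1..n}" "Y \<noteq> {}"
  shows "(Fin, Q ` Y) \<in> reach n"
proof (cases "1 \<in> Y")
  case True
  have n: "n \<in> {1..n}" using assms by auto
  define I where "I = letter_perm n ` Y - {n}"
  have "n \<in> letter_perm n ` Y" using True by force
  then have "insert n I = letter_perm n ` Y" by (auto simp: I_def)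
  then have "letter_perm n ` insert n I = Y" by (simp add: image_comp)
  moreover have "admissible n n I" "\<forall>m\<in>I. m < n"
    using letter_perm_image_subset[OF assms(1) n] n by (auto simp: I_def admissible_def)
  ultimately show ?thesis using Fin_state_in_reach_via[of n n I n] n by auto
next
  case False
  txt \<open>Reading \<open>a\<^sub>J\<close> in \<open>(q\<^sub>M, W - {J})\<close> yields \<open>Y\<close>: the transposition
    \<open>(1 J)\<close> fixes \<open>M\<close> and maps \<open>W - {J}\<close> onto \<open>W - {1} = Y - {M}\<close>.\<close>
  define M where "M = Max Y"
  define W where "W = insert 1 (Y - {M})"
  define J where "J = Max W"
  have fin: "finite Y" "finite W" using assms(1) finite_subset by (auto simp: W_def)
  have M: "M \<in> Y" "\<forall>y\<in>Y. y \<le> M" using fin assms(2) by (auto simp: M_def)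
  have J: "J \<in> W" "\<forall>w\<in>W. w \<le> J"
    using Max_in[OF fin(2)] Max_ge[OF fin(2)] unfolding J_def by (auto simp: W_def)
  have "M \<noteq> 1" "M \<in> {1..n}" using M(1) False assms(1) by auto
  have "M \<notin> W" using \<open>M \<noteq> 1\<close> by (simp add: W_def)
  have "W \<subseteq> {1..n}" "\<forall>w\<in>W. w \<le> M"
    using assms(1) M(2) \<open>M \<in> {1..n}\<close> by (auto simp: W_def)
  have adm: "admissible n M (W - {J})"
    using \<open>M \<in> {1..n}\<close> \<open>W \<subseteq> {1..n}\<close> \<open>M \<notin> W\<close> by (auto simp: admissible_def)
  have "J \<in> {1..n}" "J \<le> M" using J(1) \<open>W \<subseteq> {1..n}\<close> \<open>\<forall>w\<in>W. w \<le> M\<close> by auto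
  have "\<forall>m\<in>W - {J}. m < J" using J(2) by force
  have "letter_perm J M = M" using \<open>M \<noteq> 1\<close> \<open>M \<notin> W\<close> J(1) by (metis transpose_apply_other)
  then have "letter_perm J ` insert M (W - {J}) = insert M (W - {1})"
    using letter_perm_image_remove[of W J] J(1) by (simp add: W_def)
  also have "\<dots> = Y" using M(1) False by (auto simp: W_def)
  finally show ?thesis
    using Fin_state_in_reach_via[OF adm \<open>J \<in> {1..n}\<close> \<open>J \<le> M\<close> \<open>\<forall>m\<in>W - {J}. m < J\<close>] by simp
qed

section \<open>Trimming\<close>

abbreviation spec_det_Tn :: "nat \<Rightarrow> (st \<times> st set, nat \<times> nat) aut" where
  "spec_det_Tn n \<equiv> spec_det (Tn n) S"

lemma spec_det_Tn_simps:
  "states (spec_det_Tn n) = reach n"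
  "inits (spec_det_Tn n) = {(S, {})}"
  "finals (spec_det_Tn n) = {x \<in> reach n. fst x = Fin \<and> Fin \<notin> snd x}"
  "trans (spec_det_Tn n) = sd_trans (Delta n) S"
  by (auto simp: spec_det_def Tn_def)

lemma edge_rel_spec_det_Tn: "(x, y) \<in> edge_rel (spec_det_Tn n) \<longleftrightarrow> (\<exists>j. sd_edge n j x y)"
  by (auto simp: edge_rel_def spec_det_Tn_simps sd_edge_def)

lemma accessible_spec_det_Tn: "accessible (spec_det_Tn n) = reach n"
proof -
  have "((S, {}), (p, N)) \<in> (edge_rel (spec_det_Tn n))\<^sup>*" if "(p, N) \<in> reach n" for p N
    using that
  proof (induction rule: sd_states.induct)
    case (step p N a v p')
    then have "((p, N), (p', sd_succ (Delta n) N p a v)) \<in> edge_rel (spec_det_Tn n)"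
      by (auto simp: edge_rel_spec_det_Tn sd_edge_iff)
    with step.IH show ?case by (rule rtrancl_into_rtrancl)
  qed simp
  then show ?thesis by (auto simp: accessible_def spec_det_Tn_simps)
qed

lemma final_coaccessible: "x \<in> states A \<Longrightarrow> x \<in> finals A \<Longrightarrow> x \<in> coaccessible A"
  unfolding coaccessible_def by blast

lemma Fin_in_reach_final:
  assumes "x \<in> reach n" "fst x = Fin"
  shows "x \<in> finals (spec_det_Tn n)"
  using assms(2)
  by (cases rule: reach_cases[OF assms(1)]) (use assms(1) in \<open>auto simp: spec_det_Tn_simps qstate_def\<close>)

lemma coaccessible_sd_edge:
  assumes "sd_edge n j x y" "y \<in> coaccessible (spec_det_Tn n)"
  shows "x \<in> coaccessible (spec_det_Tn n)"
proof -
  have "(x, y) \<in> edge_rel (spec_det_Tn n)" using assms(1) by (auto simp: edge_rel_spec_det_Tn)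
  then show ?thesis
    using assms sd_edge_source_reach by (auto simp: coaccessible_def spec_det_Tn_simps
        intro: converse_rtrancl_into_rtrancl)
qed

text \<open>Every state reaches a final state: the letter \<open>k\<close> leads from \<open>q\<^sub>k\<close> to \<open>q\<^sub>1\<close>,
  the letter \<open>n\<close> leads from \<open>q\<^sub>1\<close> to \<open>q\<^sub>n\<close> and from \<open>q\<^sub>n\<close> to \<open>f\<close>.\<close>

lemma qstate_coaccessible:
  assumes "qstate k I b \<in> reach n"
  shows "qstate k I b \<in> coaccessible (spec_det_Tn n)"
proof -
  have fin: "x \<in> coaccessible (spec_det_Tn n)" if "x \<in> reach n" "fst x = Fin" for x
    by (rule final_coaccessible)
      (use Fin_in_reach_final[OF that] that(1) in \<open>simp_all add: spec_det_Tn_simps\<close>)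
  have to_Fin: "qstate n I b \<in> coaccessible (spec_det_Tn n)"
    if "qstate n I b \<in> reach n" for I b
  proof -
    note adm = admissible_of_reach[OF that]
    then have "sd_edge n n (qstate n I b) (Fin, Q ` letter_perm n ` insert n I)"
      using sd_edge_from_qstate[OF adm that] by (force simp: admissible_def)
    then show ?thesis using fin[OF sd_edge_target_reach] coaccessible_sd_edge by fastforce
  qed
  have to_n: "qstate 1 I b \<in> coaccessible (spec_det_Tn n)" if "qstate 1 I b \<in> reach n" for I b
  proof -
    note adm = admissible_of_reach[OF that]
    then have "sd_edge n n (qstate 1 I b) (qstate n (letter_perm n ` I) (\<exists>m\<in>I. n \<le> m))"
      using sd_edge_from_qstate[OF adm that] by (auto simp: admissible_def)
    then show ?thesis using to_Fin[OF sd_edge_target_reach] coaccessible_sd_edge by blast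
  qed
  note adm = admissible_of_reach[OF assms]
  then have "sd_edge n k (qstate k I b) (qstate 1 (letter_perm k ` I) (\<exists>m\<in>I. k \<le> m))"
    using sd_edge_from_qstate[OF adm assms] by (auto simp: admissible_def)
  then show ?thesis using to_n[OF sd_edge_target_reach] coaccessible_sd_edge by blast
qed

lemma coaccessible_spec_det_Tn:
  assumes "1 \<le> n"
  shows "coaccessible (spec_det_Tn n) = reach n"
proof -
  have "x \<in> coaccessible (spec_det_Tn n)" if x: "x \<in> reach n" for x
    using x
  proof (cases rule: reach_cases)
    case S
    have "sd_edge n 1 (S, {}) (qstate 1 {} False)" using assms by (auto simp: sd_edge_from_S)
    then show ?thesis
      using S qstate_coaccessible[OF sd_edge_target_reach] coaccessible_sd_edge by blast
  next
    case (Fin Y)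
    then show ?thesis
      by (intro final_coaccessible)
        (use Fin_in_reach_final[OF x] x in \<open>simp_all add: spec_det_Tn_simps\<close>)
  qed (use qstate_coaccessible x in blast)
  then show ?thesis by (auto simp: coaccessible_def spec_det_Tn_simps)
qed

lemma Tn'_simps:
  assumes "1 \<le> n"
  shows "states (Tn' n) = reach n"
    and "inits (Tn' n) = {(S, {})}"
    and "finals (Tn' n) = {x \<in> reach n. fst x = Fin \<and> Fin \<notin> snd x}"
    and "trans (Tn' n) = sd_trans (Delta n) S"
  using sd_trans_reach sd_states.init[where D = "Delta n" and i = S]
  by (auto simp: Tn'_def trim_def Let_def accessible_spec_det_Tn coaccessible_spec_det_Tn[OF assms]
      spec_det_Tn_simps)

section \<open>Counting the states of \<open>T'\<^sub>n\<close>\<close>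

lemma finite_reach: "finite (reach n)"
proof (rule finite_subset)
  show "reach n \<subseteq> states (Tn n) \<times> Pow (states (Tn n))"
  proof
    fix x assume "x \<in> reach n"
    then show "x \<in> states (Tn n) \<times> Pow (states (Tn n))"
      by (cases rule: reach_cases) (auto simp: Tn_def qstate_def admissible_def fin_if_def)
  qed
  show "finite (states (Tn n) \<times> Pow (states (Tn n)))" by (simp add: Tn_def)
qed

lemma card_reach:
  assumes "1 \<le> n"
  shows "n * 2 ^ (n - 1) + 2 ^ n \<le> card (reach n)"
proof -
  define pairs where "pairs = Sigma {1..n} (\<lambda>k. Pow ({1..n} - {k}))"
  define Q_part where "Q_part = (\<lambda>(k, I). qstate k I (I \<noteq> {})) ` pairs"
  define other_part where "other_part = insert (S, {}) ((\<lambda>Y. (Fin, Q ` Y)) ` (Pow {1..n} - {{}}))"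
  have "card pairs = (\<Sum>k\<in>{1..n}. 2 ^ card ({1..n} - {k}))"
    unfolding pairs_def by (subst card_SigmaI) (auto simp: card_Pow)
  also have "\<dots> = n * 2 ^ (n - 1)" by simp
  finally have "card Q_part = n * 2 ^ (n - 1)"
    unfolding Q_part_def by (subst card_image) (auto intro!: inj_onI)
  moreover have "card other_part = 2 ^ n"
    unfolding other_part_def by (subst card_insert_disjoint) (auto simp: card_image inj_on_def card_Pow)
  moreover have "Q_part \<inter> other_part = {}"
    by (auto simp: Q_part_def other_part_def qstate_def)
  moreover have "Q_part \<union> other_part \<subseteq> reach n"
  proof -
    have "qstate k I (I \<noteq> {}) \<in> reach n" if "admissible n k I" for k I
      using qstate_True_in_reach[OF that] qstate_False_in_reach[OF that] by (cases "I = {}") auto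
    then show ?thesis
      using Fin_state_in_reach sd_states.init[where D = "Delta n" and i = S]
      by (auto simp: Q_part_def other_part_def pairs_def admissible_def)
  qed
  ultimately show ?thesis
    using card_mono[OF finite_reach] card_Un_disjoint[of Q_part other_part]
      finite_subset[OF _ finite_reach] by (metis finite_Un)
qed

lemma powr_lower_bound:
  assumes "1 \<le> n"
  shows "(2 * real n + 3) * 2 powr (real n - 2) \<le> real (n * 2 ^ (n - 1) + 2 ^ n)"
proof -
  define t :: real where "t = 2 ^ (n - 1)"
  have "(2::real) ^ n = 2 * t"
    using assms by (simp add: t_def power_Suc[symmetric])
  moreover have "(2::real) powr (real n - 2) = 2 ^ n / 4"
    by (simp add: powr_diff powr_realpow)
  ultimately have "(2 * real n + 3) * 2 powr (real n - 2) = real n * t + 3 / 2 * t"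
    by (simp add: field_simps)
  moreover have "real (n * 2 ^ (n - 1) + 2 ^ n) = real n * t + 2 * t"
    using \<open>2 ^ n = 2 * t\<close> by (simp add: t_def)
  moreover have "0 \<le> t" by (simp add: t_def)
  ultimately show ?thesis by simp
qed

section \<open>Subset construction of the underlying automaton\<close>

lemma subset_det_states_subset:
  assumes "P \<in> subset_det_states Ls A" "inits A \<subseteq> X" "\<And>p a q. (p, a, q) \<in> trans A \<Longrightarrow> q \<in> X"
  shows "P \<subseteq> X"
  using assms(1) by induction (use assms(2,3) in \<open>auto simp: subset_step_def\<close>)

lemma subset_step_underlying_Tn':
  assumes "1 \<le> n"
  shows "subset_step (underlying (Tn' n)) P a = {y. \<exists>x\<in>P. sd_edge n a x y}"
  by (auto simp: subset_step_def underlying_def Tn'_simps[OF assms] sd_edge_def)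

lemma subset_det_underlying_Tn'_subset_reach:
  assumes "1 \<le> n" "P \<in> subset_det_states Ls (underlying (Tn' n))"
  shows "P \<subseteq> reach n"
  by (rule subset_det_states_subset[OF assms(2)])
    (use sd_trans_reach sd_states.init[where D = "Delta n" and i = S] in
      \<open>auto simp: underlying_def Tn'_simps[OF assms(1)]\<close>)

definition perm_pairs :: "(nat \<Rightarrow> nat) \<Rightarrow> (nat \<times> nat set) set \<Rightarrow> (nat \<times> nat set) set" where
  "perm_pairs p X = (\<lambda>(k, I). (p k, p ` I)) ` X"

lemma perm_pairs_id [simp]: "perm_pairs id X = X"
  by (auto simp: perm_pairs_def)

lemma perm_pairs_comp: "perm_pairs (f \<circ> g) X = perm_pairs f (perm_pairs g X)"
  by (force simp: perm_pairs_def image_comp)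

lemma index_pairs_subset_step:
  assumes "1 \<le> n" "P \<subseteq> reach n" "(S, {}) \<notin> P" "a \<in> {1..n}"
  shows "index_pairs (subset_step (underlying (Tn' n)) P a) = perm_pairs (letter_perm a) (index_pairs P)"
proof (intro set_eqI iffI)
  fix z
  assume "z \<in> index_pairs (subset_step (underlying (Tn' n)) P a)"
  then obtain k' I' b' x where z: "z = (k', I')" and x: "x \<in> P" "sd_edge n a x (qstate k' I' b')"
    by (auto simp: index_pairs_def subset_step_underlying_Tn'[OF assms(1)])
  from x(1) assms(2) have "x \<in> reach n" by blast
  then show "z \<in> perm_pairs (letter_perm a) (index_pairs P)"
  proof (cases rule: reach_cases)
    case S
    then show ?thesis using x(1) assms(3) by simp
  next
    case (Q k I b)
    have "qstate k' I' b' = qstate (letter_perm a k) (letter_perm a ` I) (\<exists>m\<in>I. a \<le> m)"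
      using x(2) sd_edge_from_qstate[OF Q(2)] \<open>x \<in> reach n\<close> unfolding Q(1) by (auto simp: qstate_def)
    moreover have "(k, I) \<in> index_pairs P" using x(1) Q(1) by (auto simp: index_pairs_def)
    ultimately show ?thesis using z by (force simp: perm_pairs_def)
  next
    case (Fin Y)
    then show ?thesis using x(2) no_sd_edge_from_Fin by simp
  qed
next
  fix z
  assume "z \<in> perm_pairs (letter_perm a) (index_pairs P)"
  then obtain k I b where z: "z = (letter_perm a k, letter_perm a ` I)" and x: "qstate k I b \<in> P"
    by (auto simp: perm_pairs_def index_pairs_def)
  with assms(2) have reached: "qstate k I b \<in> reach n" by blast
  then have "sd_edge n a (qstate k I b) (qstate (letter_perm a k) (letter_perm a ` I) (\<exists>m\<in>I. a \<le> m))"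
    using sd_edge_from_qstate[OF admissible_of_reach[OF reached] reached] assms(4) by simp
  then show "z \<in> index_pairs (subset_step (underlying (Tn' n)) P a)"
    using x z unfolding index_pairs_def subset_step_underlying_Tn'[OF assms(1)] by blast
qed

definition staircase :: "nat \<Rightarrow> (nat \<times> nat set) set" where
  "staircase n = (\<lambda>i. (i, {1..i - 1})) ` {1..n}"

lemma perm_pairs_staircase_inj:
  assumes "p permutes {1..n}" "q permutes {1..n}" "perm_pairs p (staircase n) = perm_pairs q (staircase n)"
  shows "p = q"
proof
  fix i
  show "p i = q i"
  proof (cases "i \<in> {1..n}")
    case False
    then show ?thesis using assms(1,2) by (simp add: permutes_not_in)
  next
    case True
    then have "(i, {1..i - 1}) \<in> staircase n" unfolding staircase_def by (rule imageI)
    then have "(p i, p ` {1..i - 1}) \<in> perm_pairs p (staircase n)"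
      unfolding perm_pairs_def by (rule rev_image_eqI) simp
    then have "(p i, p ` {1..i - 1}) \<in> perm_pairs q (staircase n)" by (simp only: assms(3))
    then obtain i' where i': "i' \<in> {1..n}" "p i = q i'" "p ` {1..i - 1} = q ` {1..i' - 1}"
      by (auto simp: perm_pairs_def staircase_def)
    have "card (p ` {1..i - 1}) = i - 1" "card (q ` {1..i' - 1}) = i' - 1"
      using assms(1,2) by (simp_all add: card_image permutes_inj_on)
    then have "i - 1 = i' - 1" using i'(3) by simp
    then have "i = i'" using i'(1) True by auto
    then show ?thesis using i'(2) by simp
  qed
qed

lemma subset_step_underlying_from_S:
  assumes "1 \<le> n"
  shows "subset_step (underlying (Tn' n)) {(S, {})} 1 = (\<lambda>i. qstate i {1..i - 1} False) ` {1..n}"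
  using assms by (auto simp: subset_step_underlying_Tn'[OF assms] sd_edge_from_S)

lemma init_in_subset_det_underlying_Tn':
  assumes "1 \<le> n"
  shows "{(S, {})} \<in> subset_det_states Ls (underlying (Tn' n))"
  using subset_det_states.init[where A = "underlying (Tn' n)" and Sigma = Ls]
  by (simp add: underlying_def Tn'_simps[OF assms])

lemma staircase_subset_state:
  assumes "1 \<le> n"
  defines "P1 \<equiv> subset_step (underlying (Tn' n)) {(S, {})} 1"
  shows "P1 \<in> subset_det_states {1..n} (underlying (Tn' n))"
    and "P1 \<subseteq> reach n" "(S, {}) \<notin> P1" "index_pairs P1 = staircase n"
proof -
  show P1: "P1 \<in> subset_det_states {1..n} (underlying (Tn' n))"
    unfolding P1_def using assms(1)
    by (intro subset_det_states.step init_in_subset_det_underlying_Tn') auto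
  show "P1 \<subseteq> reach n" by (rule subset_det_underlying_Tn'_subset_reach[OF assms(1) P1])
  show "(S, {}) \<notin> P1" "index_pairs P1 = staircase n"
    unfolding P1_def subset_step_underlying_from_S[OF assms(1)]
    by (auto simp: qstate_def index_pairs_def staircase_def)
qed

lemma perm_staircase_reachable:
  assumes "1 \<le> n" "p permutes {1..n}"
  shows "\<exists>P\<in>subset_det_states {1..n} (underlying (Tn' n)).
           (S, {}) \<notin> P \<and> index_pairs P = perm_pairs p (staircase n)"
proof -
  let ?G = "{p. \<exists>P\<in>subset_det_states {1..n} (underlying (Tn' n)).
           (S, {}) \<notin> P \<and> index_pairs P = perm_pairs p (staircase n)}"
  have "p \<in> ?G"
  proof (rule permutes_in_star_closure[OF assms(2) finite_atLeastAtMost])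
    show "1 \<in> {1..n}" using assms(1) by simp
    show "id \<in> ?G" using staircase_subset_state[OF assms(1)] by auto
  next
    fix j g
    assume j: "j \<in> {1..n}" and "g \<in> ?G"
    then obtain P where P: "P \<in> subset_det_states {1..n} (underlying (Tn' n))" "(S, {}) \<notin> P"
      "index_pairs P = perm_pairs g (staircase n)" by auto
    let ?P' = "subset_step (underlying (Tn' n)) P j"
    have "?P' \<in> subset_det_states {1..n} (underlying (Tn' n))"
      using P(1) j by (rule subset_det_states.step)
    moreover have "(S, {}) \<notin> ?P'"
      using sd_edge_target_not_S by (fastforce simp: subset_step_underlying_Tn'[OF assms(1)])
    moreover have "index_pairs ?P' = perm_pairs (letter_perm j \<circ> g) (staircase n)"
      using index_pairs_subset_step[OF assms(1) subset_det_underlying_Tn'_subset_reach[OF assms(1) P(1)]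
          P(2) j] P(3) by (simp add: perm_pairs_comp)
    ultimately show "letter_perm j \<circ> g \<in> ?G" by blast
  qed
  then show ?thesis by simp
qed

lemma staircase_subset_step_adds_final:
  assumes "1 \<le> n"
  defines "P1 \<equiv> subset_step (underlying (Tn' n)) {(S, {})} 1"
  shows "(Fin, Q ` {1}) \<in> subset_step (underlying (Tn' n)) P1 1 - P1"
proof -
  have "qstate 1 {1..1 - 1} False \<in> (\<lambda>i. qstate i {1..i - 1} False) ` {1..n}"
    using assms(1) by (intro imageI) simp
  then have in_P1: "qstate 1 {} False \<in> P1"
    unfolding P1_def subset_step_underlying_from_S[OF assms(1)] by simp
  have "admissible n 1 {}" using assms(1) by (simp add: admissible_def)
  then have "sd_edge n 1 (qstate 1 {} False) (Fin, Q ` {1})"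
    using sd_edge_from_qstate[of n 1 "{}" False] in_P1 staircase_subset_state(2)[OF assms(1)] assms(1)
    by (auto simp: P1_def)
  then have "(Fin, Q ` {1}) \<in> subset_step (underlying (Tn' n)) P1 1"
    using in_P1 unfolding subset_step_underlying_Tn'[OF assms(1), of P1] by blast
  moreover have "(Fin, Q ` {1}) \<notin> P1"
    unfolding P1_def subset_step_underlying_from_S[OF assms(1)] by (auto simp: qstate_def)
  ultimately show ?thesis by blast
qed

lemma card_subset_det_underlying_Tn':
  assumes "1 \<le> n"
  shows "fact n + 2 \<le> card (subset_det_states {1..n} (underlying (Tn' n)))"
proof -
  let ?D = "subset_det_states {1..n} (underlying (Tn' n))"
  let ?P1 = "subset_step (underlying (Tn' n)) {(S, {})} 1"
  let ?P2 = "subset_step (underlying (Tn' n)) ?P1 1"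
  let ?staircases = "(\<lambda>p. perm_pairs p (staircase n)) ` {p. p permutes {1..n}}"
  have "?D \<subseteq> Pow (reach n)" using subset_det_underlying_Tn'_subset_reach[OF assms] by blast
  then have fin: "finite ?D" using finite_reach by (simp add: finite_subset)
  note P1 = staircase_subset_state[OF assms]
  have P2: "?P2 \<in> ?D" using P1(1) assms by (auto intro: subset_det_states.step)
  have same_pairs: "index_pairs ?P2 = index_pairs ?P1"
    using index_pairs_subset_step[OF assms P1(2,3)] assms by simp
  have "?P1 \<noteq> ?P2" using staircase_subset_step_adds_final[OF assms] by blast
  then have "\<not> inj_on index_pairs ?D" using P1(1) P2 same_pairs unfolding inj_on_def by blast
  then have less: "card (index_pairs ` ?D) < card ?D"
    using fin card_image_le[OF fin, of index_pairs] by (simp add: inj_on_iff_eq_card)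
  have "{} = index_pairs {(S, {})}" by (simp add: index_pairs_def qstate_def)
  then have sub: "insert {} ?staircases \<subseteq> index_pairs ` ?D"
    using init_in_subset_det_underlying_Tn'[OF assms] perm_staircase_reachable[OF assms] by blast
  have "inj_on (\<lambda>p. perm_pairs p (staircase n)) {p. p permutes {1..n}}"
    using perm_pairs_staircase_inj by (auto intro: inj_onI)
  moreover have "{} \<notin> ?staircases" using assms by (auto simp: perm_pairs_def staircase_def)
  moreover have "card {p. p permutes {1..n}} = fact n" "finite {p. p permutes {1..n}}"
    by (simp_all add: card_permutations finite_permutations)
  ultimately have "card (insert {} ?staircases) = fact n + 1"
    by (simp add: card_image)
  then have "fact n + 1 \<le> card (index_pairs ` ?D)"
    using card_mono[OF finite_imageI[OF fin] sub] by simp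
  then show ?thesis using less by simp
qed

section \<open>Subset construction of the reversed automaton\<close>

lemma subset_step_reversal_Tn':
  assumes "1 \<le> n"
  shows "subset_step (reversal (underlying (Tn' n))) P a = {x. \<exists>y\<in>P. sd_edge n a x y}"
  by (auto simp: subset_step_def reversal_def underlying_def Tn'_simps[OF assms] sd_edge_def)

lemma subset_det_reversal_Tn'_subset_reach:
  assumes "1 \<le> n" "P \<in> subset_det_states Ls (reversal (underlying (Tn' n)))"
  shows "P \<subseteq> reach n"
  by (rule subset_det_states_subset[OF assms(2)])
    (use sd_trans_reach in \<open>auto simp: reversal_def underlying_def Tn'_simps[OF assms(1)]\<close>)

definition separated :: "nat \<Rightarrow> nat set \<Rightarrow> (st \<times> st set) set" where
  "separated n Z = {x \<in> reach n. \<exists>k I b. x = qstate k I b \<and> k \<in> Z \<and> I \<inter> Z = {}}"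

lemma sd_edge_to_Fin_iff:
  assumes "x \<in> reach n"
  shows "(\<exists>y. sd_edge n j x y \<and> fst y = Fin) \<longleftrightarrow> j \<in> {1..n} \<and> x \<in> separated n {j..n}"
  using assms
proof (cases rule: reach_cases)
  case S
  then show ?thesis by (auto simp: sd_edge_from_S separated_def qstate_def)
next
  case (Q k I b)
  then have "I \<subseteq> {1..n}" "k \<le> n" by (auto simp: admissible_def)
  then have "(\<forall>m\<in>I. m < j) \<longleftrightarrow> I \<inter> {j..n} = {}" by (force simp: not_less)
  then show ?thesis
    using Q assms sd_edge_from_qstate[OF Q(2)] \<open>k \<le> n\<close> by (auto simp: separated_def qstate_def)
next
  case (Fin Y)
  then show ?thesis using no_sd_edge_from_Fin by (auto simp: separated_def qstate_def)
qed

lemma subset_step_reversal_finals: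
  assumes "j \<in> {1..n}"
  shows "subset_step (reversal (underlying (Tn' n))) (finals (Tn' n)) j = separated n {j..n}"
proof -
  have n: "1 \<le> n" using assms by simp
  have "y \<in> finals (Tn' n) \<longleftrightarrow> fst y = Fin" if "sd_edge n j x y" for x y
    using Fin_in_reach_final[OF sd_edge_target_reach[OF that]]
    by (auto simp: Tn'_simps[OF n] spec_det_Tn_simps)
  then have "subset_step (reversal (underlying (Tn' n))) (finals (Tn' n)) j
      = {x. \<exists>y. sd_edge n j x y \<and> fst y = Fin}"
    unfolding subset_step_reversal_Tn'[OF n] by blast
  also have "\<dots> = separated n {j..n}"
  proof (intro set_eqI iffI)
    fix x
    assume x: "x \<in> {x. \<exists>y. sd_edge n j x y \<and> fst y = Fin}"
    then have "x \<in> reach n" using sd_edge_source_reach by blast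
    then show "x \<in> separated n {j..n}" using sd_edge_to_Fin_iff x by blast
  next
    fix x
    assume x: "x \<in> separated n {j..n}"
    then have "x \<in> reach n" by (simp add: separated_def)
    then show "x \<in> {x. \<exists>y. sd_edge n j x y \<and> fst y = Fin}" using sd_edge_to_Fin_iff x assms by blast
  qed
  finally show ?thesis .
qed

lemma transpose_mem_image_iff: "x \<in> Transposition.transpose a b ` Z \<longleftrightarrow> Transposition.transpose a b x \<in> Z"
  by (metis image_iff transpose_involutory)

lemma transpose_image_disjoint_iff:
  "I \<inter> Transposition.transpose a b ` Z = {} \<longleftrightarrow> Transposition.transpose a b ` I \<inter> Z = {}"
  by (auto simp: transpose_mem_image_iff)

lemma subset_step_reversal_separated:
  assumes "Z \<subseteq> {1..n}" "Z \<noteq> {}" "separated n Z \<subseteq> P" "P \<subseteq> insert (S, {}) (separated n Z)"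
    "j \<in> {1..n}"
  shows "subset_step (reversal (underlying (Tn' n))) P j = insert (S, {}) (separated n (letter_perm j ` Z))"
proof (intro set_eqI iffI)
  have n: "1 \<le> n" using assms(5) by simp
  fix x
  assume "x \<in> subset_step (reversal (underlying (Tn' n))) P j"
  then obtain y where y: "y \<in> P" "sd_edge n j x y" by (auto simp: subset_step_reversal_Tn'[OF n])
  then have "y \<in> separated n Z" using assms(4) sd_edge_target_not_S by fastforce
  then obtain k' I' b' where y': "y = qstate k' I' b'" "k' \<in> Z" "I' \<inter> Z = {}"
    by (auto simp: separated_def)
  have "x \<in> reach n" using y(2) by (rule sd_edge_source_reach)
  then show "x \<in> insert (S, {}) (separated n (letter_perm j ` Z))"
  proof (cases rule: reach_cases)
    case (Q k I b)
    then have "k' = letter_perm j k" "I' = letter_perm j ` I"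
      using y(2) sd_edge_from_qstate[OF Q(2)] \<open>x \<in> reach n\<close> unfolding y'(1) by (auto simp: qstate_def)
    then have "k \<in> letter_perm j ` Z" "I \<inter> letter_perm j ` Z = {}"
      using y'(2,3) by (simp_all add: transpose_mem_image_iff transpose_image_disjoint_iff)
    then show ?thesis using Q \<open>x \<in> reach n\<close> by (auto simp: separated_def)
  next
    case (Fin Y)
    then show ?thesis using y(2) no_sd_edge_from_Fin by simp
  qed simp
next
  have n: "1 \<le> n" using assms(5) by simp
  fix x
  assume x: "x \<in> insert (S, {}) (separated n (letter_perm j ` Z))"
  have "\<exists>y\<in>separated n Z. sd_edge n j x y"
  proof (cases "x = (S, {})")
    case True
    define m where "m = Min Z"
    have "finite Z" using assms(1) finite_subset by blast
    then have m: "m \<in> Z" "\<forall>z\<in>Z. m \<le> z" using assms(2) by (auto simp: m_def)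
    then have edge: "sd_edge n j (S, {}) (qstate m {1..m - 1} False)"
      using assms(1,5) by (auto simp: sd_edge_from_S)
    have "{1..m - 1} \<inter> Z = {}" using m(2) by fastforce
    then have "qstate m {1..m - 1} False \<in> separated n Z"
      using sd_edge_target_reach[OF edge] m(1) unfolding separated_def by blast
    then show ?thesis using edge True by blast
  next
    case False
    then obtain k I b where x': "x = qstate k I b" "x \<in> reach n" "k \<in> letter_perm j ` Z"
      "I \<inter> letter_perm j ` Z = {}" using x by (auto simp: separated_def)
    let ?y = "qstate (letter_perm j k) (letter_perm j ` I) (\<exists>m\<in>I. j \<le> m)"
    have "sd_edge n j x ?y"
      using sd_edge_from_qstate[OF admissible_of_reach] x' assms(5) by simp
    moreover have "letter_perm j k \<in> Z" "letter_perm j ` I \<inter> Z = {}"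
      using x'(3,4) by (simp_all add: transpose_mem_image_iff transpose_image_disjoint_iff)
    ultimately have "?y \<in> separated n Z" using sd_edge_target_reach unfolding separated_def by blast
    then show ?thesis using \<open>sd_edge n j x ?y\<close> by blast
  qed
  then show "x \<in> subset_step (reversal (underlying (Tn' n))) P j"
    using assms(3) by (auto simp: subset_step_reversal_Tn'[OF n])
qed

lemma finals_in_subset_det_reversal:
  "finals (Tn' n) \<in> subset_det_states Ls (reversal (underlying (Tn' n)))"
  using subset_det_states.init[where A = "reversal (underlying (Tn' n))" and Sigma = Ls]
  by (simp add: reversal_def underlying_def)

lemma separated_interval_reachable:
  assumes "j \<in> {1..n}"
  shows "separated n {j..n} \<in> subset_det_states {1..n} (reversal (underlying (Tn' n)))"
  using subset_det_states.step[OF finals_in_subset_det_reversal[of n] assms]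
  by (simp only: subset_step_reversal_finals[OF assms])

lemma separated_reachable:
  assumes "Z \<subseteq> {1..n}" "Z \<noteq> {}"
  shows "insert (S, {}) (separated n Z) \<in> subset_det_states {1..n} (reversal (underlying (Tn' n)))"
proof -
  let ?RA = "reversal (underlying (Tn' n))"
  let ?D = "subset_det_states {1..n} ?RA"
  define j where "j = n + 1 - card Z"
  have "finite Z" using assms(1) finite_subset by blast
  then have "card Z \<le> n" "card Z \<noteq> 0" using assms card_mono[OF _ assms(1)] by auto
  then have j: "j \<in> {1..n}" "card {j..n} = card Z" by (auto simp: j_def)
  have "separated n {j..n} \<in> ?D" by (rule separated_interval_reachable[OF j(1)])
  moreover have "subset_step ?RA (separated n {j..n}) 1 = insert (S, {}) (separated n {j..n})"
    using subset_step_reversal_separated[of "{j..n}" n "separated n {j..n}" 1] j(1) by auto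
  ultimately have base: "insert (S, {}) (separated n {j..n}) \<in> ?D"
    using subset_det_states.step[of _ "{1..n}" ?RA 1] j(1) by fastforce
  let ?G = "{p. p ` {j..n} \<subseteq> {1..n} \<and> insert (S, {}) (separated n (p ` {j..n})) \<in> ?D}"
  have "p \<in> ?G" if "p permutes {1..n}" for p
  proof (rule permutes_in_star_closure[OF that finite_atLeastAtMost])
    show "1 \<in> {1..n}" "id \<in> ?G" using j(1) base by auto
    fix i g
    assume i: "i \<in> {1..n}" and "g \<in> ?G"
    then have "subset_step ?RA (insert (S, {}) (separated n (g ` {j..n}))) i \<in> ?D"
      by (auto intro: subset_det_states.step)
    moreover have "g ` {j..n} \<subseteq> {1..n}" "g ` {j..n} \<noteq> {}" using \<open>g \<in> ?G\<close> j(1) by auto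
    moreover have "letter_perm i ` g ` {j..n} \<subseteq> {1..n}"
      using letter_perm_image_subset[OF _ i] calculation(2) by blast
    moreover have "subset_step ?RA (insert (S, {}) (separated n (g ` {j..n}))) i
        = insert (S, {}) (separated n (letter_perm i ` g ` {j..n}))"
      using calculation(2,3) i by (intro subset_step_reversal_separated) auto
    ultimately show "letter_perm i \<circ> g \<in> ?G" by (simp add: image_comp)
  qed
  moreover obtain p where "p permutes {1..n}" "p ` {j..n} = Z"
    using permutes_onto_subset[of "{1..n}" "{j..n}" Z] assms(1) j by auto
  ultimately show ?thesis by blast
qed

definition state_indices :: "(st \<times> st set) set \<Rightarrow> nat set" where
  "state_indices P = {k. \<exists>N. (Q k, N) \<in> P}"

lemma state_indices_separated:
  assumes "Z \<subseteq> {1..n}"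
  shows "state_indices (separated n Z) = Z"
proof (intro set_eqI iffI)
  fix k
  assume "k \<in> Z"
  then have "qstate k {} False \<in> separated n Z"
    using qstate_False_in_reach[of n k "{}"] assms by (auto simp: separated_def admissible_def)
  then show "k \<in> state_indices (separated n Z)" by (auto simp: state_indices_def qstate_def)
qed (auto simp: state_indices_def separated_def qstate_def)

lemma card_reversal_keys:
  "card (insert (False, {}) ((\<lambda>j. (False, {j..n})) ` {1..n} \<union> (\<lambda>Z. (True, Z)) ` (Pow {1..n} - {{}})))
     = 2 ^ n + n"
proof -
  let ?intervals = "(\<lambda>j. (False, {j..n})) ` {1..n}"
  let ?nonempty = "(\<lambda>Z. (True, Z)) ` (Pow {1..n} - {{}})"
  have "card ?intervals = n" by (subst card_image) (auto simp: inj_on_def Icc_eq_Icc)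
  moreover have "card ?nonempty = 2 ^ n - 1" by (subst card_image) (auto simp: inj_on_def card_Pow)
  moreover have "?intervals \<inter> ?nonempty = {}" "(False, {}) \<notin> ?intervals \<union> ?nonempty" by auto
  moreover have "finite ?intervals" "finite ?nonempty" by simp_all
  ultimately show ?thesis using card_Un_disjoint[of ?intervals ?nonempty] one_le_power[of 2 n] by simp
qed

lemma card_subset_det_reversal_Tn':
  assumes "1 \<le> n"
  shows "2 ^ n + n \<le> card (subset_det_states {1..n} (reversal (underlying (Tn' n))))"
proof -
  let ?D = "subset_det_states {1..n} (reversal (underlying (Tn' n)))"
  define key where "key P = ((S, {}) \<in> P, state_indices P)" for P
  define intervals where "intervals = (\<lambda>j. (False, {j..n})) ` {1..n}"
  define nonempty where "nonempty = (\<lambda>Z. (True, Z)) ` (Pow {1..n} - {{}})"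
  have "?D \<subseteq> Pow (reach n)" using subset_det_reversal_Tn'_subset_reach[OF assms] by blast
  then have fin: "finite ?D" using finite_reach by (simp add: finite_subset)
  have "(False, {}) \<in> key ` ?D"
  proof -
    have "key (finals (Tn' n)) = (False, {})"
      by (auto simp: key_def state_indices_def Tn'_simps[OF assms])
    then show ?thesis using finals_in_subset_det_reversal by (metis imageI)
  qed
  moreover have "intervals \<subseteq> key ` ?D"
  proof
    fix x assume "x \<in> intervals"
    then obtain j where j: "j \<in> {1..n}" "x = (False, {j..n})" by (auto simp: intervals_def)
    then have "key (separated n {j..n}) = x"
      using state_indices_separated[of "{j..n}" n] by (auto simp: key_def separated_def qstate_def)
    then show "x \<in> key ` ?D" using separated_interval_reachable[OF j(1)] by (metis imageI)
  qed
  moreover have "nonempty \<subseteq> key ` ?D"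
  proof
    fix x assume "x \<in> nonempty"
    then obtain Z where Z: "Z \<subseteq> {1..n}" "Z \<noteq> {}" "x = (True, Z)" by (auto simp: nonempty_def)
    then have "key (insert (S, {}) (separated n Z)) = x"
      using state_indices_separated[OF Z(1)] by (auto simp: key_def state_indices_def)
    then show "x \<in> key ` ?D" using separated_reachable[OF Z(1,2)] by (metis imageI)
  qed
  ultimately have sub: "insert (False, {}) (intervals \<union> nonempty) \<subseteq> key ` ?D" by blast
  have "card (insert (False, {}) (intervals \<union> nonempty)) = 2 ^ n + n"
    unfolding intervals_def nonempty_def by (rule card_reversal_keys)
  then have "2 ^ n + n \<le> card (key ` ?D)"
    using card_mono[OF finite_imageI[OF fin] sub] by simp
  then show ?thesis using card_image_le[OF fin, of key] by simp
qed

theorem proposition9: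
  fixes n :: nat
  assumes "1 \<le> n"
  shows "real (card (states (Tn' n))) \<ge> (2 * real n + 3) * 2 powr (real n - 2)
       \<and> card (subset_det_states {1..n} (underlying (Tn' n))) \<ge> fact n + 2
       \<and> card (subset_det_states {1..n} (reversal (underlying (Tn' n)))) \<ge> 2 ^ n + n"
proof (intro conjI)
  have "real (n * 2 ^ (n - 1) + 2 ^ n) \<le> real (card (states (Tn' n)))"
    using card_reach[OF assms] by (simp only: Tn'_simps[OF assms] of_nat_le_iff)
  then show "real (card (states (Tn' n))) \<ge> (2 * real n + 3) * 2 powr (real n - 2)"
    using powr_lower_bound[OF assms] by linarith
  show "card (subset_det_states {1..n} (underlying (Tn' n))) \<ge> fact n + 2"
    by (rule card_subset_det_underlying_Tn'[OF assms])
  show "card (subset_det_states {1..n} (reversal (underlying (Tn' n)))) \<ge> 2 ^ n + n"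
    by (rule card_subset_det_reversal_Tn'[OF assms])
qed

end
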